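(* Let $\ell(z)=\log(1+\exp(-z))$. For a data point $z=(x,y)\in\mathbb{R}^d\times\{-1,+1\}$, a norm $\|\cdot\|$ on $\mathbb{R}^d$ and $c>0$, define $$R_z(w)=\max_{\|r\|\le c}\ell\big(y\,w^\top(x+r)\big)-\ell\big(y\,w^\top x\big),\qquad w\in\mathbb{R}^d.$$ Then $R_z$ is in general not convex: there exist $d$, $c>0$ and $z$ such that $R_z$ is not a convex function of $w$. *)

theory Defs
  imports "HOL-Analysis.Analysis"
begin

text \<open>R^d is represented as real-valued functions on nat vanishing outside {..<d}.\<close>

definition rvec :: "nat \<Rightarrow> (nat \<Rightarrow> real) set" where
  "rvec d = {v. \<forall>i\<ge>d. v i = 0}"

definition dotp :: "nat \<Rightarrow> (nat \<Rightarrow> real) \<Rightarrow> (nat \<Rightarrow> real) \<Rightarrow> real" where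
  "dotp d w v = (\<Sum>i<d. w i * v i)"

definition is_norm_on :: "nat \<Rightarrow> ((nat \<Rightarrow> real) \<Rightarrow> real) \<Rightarrow> bool" where
  "is_norm_on d N \<longleftrightarrow>
     (\<forall>v\<in>rvec d. 0 \<le> N v \<and> (N v = 0 \<longleftrightarrow> v = (\<lambda>_. 0))) \<and>
     (\<forall>a v. v \<in> rvec d \<longrightarrow> N (\<lambda>i. a * v i) = \<bar>a\<bar> * N v) \<and>
     (\<forall>u\<in>rvec d. \<forall>v\<in>rvec d. N (\<lambda>i. u i + v i) \<le> N u + N v)"

definition lloss :: "real \<Rightarrow> real" where
  "lloss z = ln (1 + exp (- z))"

definition Rz :: "nat \<Rightarrow> ((nat \<Rightarrow> real) \<Rightarrow> real) \<Rightarrow> real \<Rightarrow> (nat \<Rightarrow> real) \<Rightarrow> real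
                  \<Rightarrow> (nat \<Rightarrow> real) \<Rightarrow> real" where
  "Rz d N c x y w =
     (SUP r\<in>{r\<in>rvec d. N r \<le> c}. lloss (y * dotp d w (\<lambda>i. x i + r i)))
     - lloss (y * dotp d w x)"

definition convex_fun_on :: "nat \<Rightarrow> ((nat \<Rightarrow> real) \<Rightarrow> real) \<Rightarrow> bool" where
  "convex_fun_on d f \<longleftrightarrow>
     (\<forall>u\<in>rvec d. \<forall>v\<in>rvec d. \<forall>t::real. 0 \<le> t \<and> t \<le> 1 \<longrightarrow>
        f (\<lambda>i. (1 - t) * u i + t * v i) \<le> (1 - t) * f u + t * f v)"

end

theory Submission
  imports Defs
begin

text \<open>Take \<open>d = 1\<close>, \<open>x = e\<close>, \<open>y = 1\<close> and radius \<open>c = N e\<close>. For \<open>w = a e\<close> with \<open>a \<ge> 0\<close> the worst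
  perturbation is \<open>r = -e\<close>, which cancels the margin, so \<open>R\<^sub>z(a e) = ln 2 - \<ell>(a)\<close>. Since \<open>\<ell>\<close> is
  strictly convex this function of \<open>a\<close> is strictly concave, so \<open>R\<^sub>z\<close> violates convexity at the
  midpoint of \<open>0\<close> and \<open>2 e\<close>.\<close>

definition axis0 :: "real \<Rightarrow> nat \<Rightarrow> real" where
  "axis0 a = (\<lambda>i. if i = 0 then a else 0)"

lemma axis0_rvec: "axis0 a \<in> rvec 1"
  by (simp add: axis0_def rvec_def)

lemma rvec1_eq_scaleR_axis0: "r \<in> rvec 1 \<Longrightarrow> r = (\<lambda>i. r 0 * axis0 1 i)"
  by (auto simp: rvec_def axis0_def fun_eq_iff)

lemma dotp_axis0: "dotp 1 (axis0 a) v = a * v 0"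
  by (simp add: dotp_def axis0_def)

lemma is_norm_on_scale:
  "is_norm_on d N \<Longrightarrow> v \<in> rvec d \<Longrightarrow> N (\<lambda>i. a * v i) = \<bar>a\<bar> * N v"
  unfolding is_norm_on_def by blast

lemma is_norm_on_pos:
  "is_norm_on d N \<Longrightarrow> v \<in> rvec d \<Longrightarrow> v \<noteq> (\<lambda>_. 0) \<Longrightarrow> N v > 0"
  unfolding is_norm_on_def by (metis less_eq_real_def)

lemma is_norm_on_rvec1:
  assumes "is_norm_on 1 N" "r \<in> rvec 1"
  shows "N r = \<bar>r 0\<bar> * N (axis0 1)"
  using rvec1_eq_scaleR_axis0[OF assms(2)] is_norm_on_scale[OF assms(1) axis0_rvec] by metis

lemma is_norm_on_axis0_pos: "is_norm_on 1 N \<Longrightarrow> N (axis0 1) > 0"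
  using is_norm_on_pos[OF _ axis0_rvec] by (auto simp: axis0_def fun_eq_iff)

lemma convex_fun_on_midpoint:
  assumes "convex_fun_on d f" "u \<in> rvec d" "v \<in> rvec d"
  shows "f (\<lambda>i. (u i + v i) / 2) \<le> (f u + f v) / 2"
proof -
  have "f (\<lambda>i. (1 - 1/2) * u i + 1/2 * v i) \<le> (1 - 1/2) * f u + 1/2 * f v"
    by (rule assms(1)[unfolded convex_fun_on_def, rule_format, OF assms(2,3)]) simp
  thus ?thesis by (simp add: add_divide_distrib)
qed

lemma lloss_antimono: "a \<le> b \<Longrightarrow> lloss b \<le> lloss a"
  unfolding lloss_def by (simp add: add_pos_pos)

lemma lloss_strict_midpoint_convex:
  assumes "a \<noteq> b"
  shows "2 * lloss ((a + b) / 2) < lloss a + lloss b"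
proof -
  define u where "u = exp (- a / 2)"
  define v where "v = exp (- b / 2)"
  have "u \<noteq> v" using assms by (simp add: u_def v_def)
  hence "2 * (u * v) < u\<^sup>2 + v\<^sup>2"
    using sum_power2_gt_zero_iff[of "u - v" 0] by (simp add: power2_eq_square algebra_simps)
  hence lt: "(1 + u * v)\<^sup>2 < (1 + u\<^sup>2) * (1 + v\<^sup>2)"
    by (simp add: power2_eq_square algebra_simps)
  have pos: "0 < 1 + u * v" by (simp add: u_def v_def add_pos_pos)
  have "2 * ln (1 + u * v) = ln ((1 + u * v)\<^sup>2)"
    using pos by (simp add: ln_realpow)
  also have "\<dots> < ln ((1 + u\<^sup>2) * (1 + v\<^sup>2))"
    using lt pos by (metis ln_less_cancel_iff zero_less_power less_trans)
  also have "\<dots> = ln (1 + u\<^sup>2) + ln (1 + v\<^sup>2)"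
    by (simp add: ln_mult_pos add_pos_nonneg)
  finally have "2 * ln (1 + u * v) < ln (1 + u\<^sup>2) + ln (1 + v\<^sup>2)" .
  moreover have "u * v = exp (- ((a + b) / 2))" "u\<^sup>2 = exp (- a)" "v\<^sup>2 = exp (- b)"
    by (simp_all add: u_def v_def power2_eq_square field_simps flip: exp_add)
  ultimately show ?thesis by (simp add: lloss_def)
qed

lemma Rz_axis0:
  assumes N: "is_norm_on 1 N" and "0 \<le> a"
  shows "Rz 1 N (N (axis0 1)) (axis0 1) 1 (axis0 a) = ln 2 - lloss a"
proof -
  define S where "S = {r \<in> rvec 1. N r \<le> N (axis0 1)}"
  define f where "f = (\<lambda>r. lloss (1 * dotp 1 (axis0 a) (\<lambda>i. axis0 1 i + r i)))"
  have f: "f r = lloss (a * (1 + r 0))" for r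
    unfolding f_def dotp_axis0 by (simp add: axis0_def)
  have pos: "N (axis0 1) > 0"
    using N by (rule is_norm_on_axis0_pos)
  have "axis0 (-1) \<in> S"
    using is_norm_on_rvec1[OF N axis0_rvec, of "-1"] axis0_rvec by (simp add: S_def axis0_def)
  moreover have "f (axis0 (-1)) = lloss 0"
    by (simp add: f axis0_def)
  moreover have "f r \<le> lloss 0" if "r \<in> S" for r
  proof -
    have "\<bar>r 0\<bar> * N (axis0 1) \<le> 1 * N (axis0 1)"
      using that is_norm_on_rvec1[OF N, of r] by (simp add: S_def)
    hence "\<bar>r 0\<bar> \<le> 1" using pos by (meson mult_le_cancel_right_pos)
    hence "0 \<le> a * (1 + r 0)" using \<open>0 \<le> a\<close> by simp
    thus ?thesis unfolding f by (rule lloss_antimono)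
  qed
  ultimately have "(SUP r\<in>S. f r) = lloss 0"
    by (intro cSup_eq_maximum) (metis image_eqI, blast)
  moreover have "lloss 0 = ln 2"
    by (simp add: lloss_def)
  moreover have "lloss (1 * dotp 1 (axis0 a) (axis0 1)) = lloss a"
    unfolding dotp_axis0 by (simp add: axis0_def)
  ultimately show ?thesis
    unfolding Rz_def S_def f_def by simp
qed

theorem proposition5:
  shows "\<exists>d::nat. \<forall>N. is_norm_on d N \<longrightarrow>
           (\<exists>c::real. c > 0 \<and> (\<exists>x\<in>rvec d. \<exists>y\<in>{-1, 1::real}.
              \<not> convex_fun_on d (Rz d N c x y)))"
proof (rule exI[of _ 1], intro allI impI)
  fix N assume N: "is_norm_on 1 N"
  let ?R = "Rz 1 N (N (axis0 1)) (axis0 1) 1"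
  have "\<not> convex_fun_on 1 ?R"
  proof
    assume "convex_fun_on 1 ?R"
    moreover have "(\<lambda>i. (axis0 0 i + axis0 2 i) / 2) = axis0 1"
      by (auto simp: axis0_def fun_eq_iff)
    ultimately have "?R (axis0 1) \<le> (?R (axis0 0) + ?R (axis0 2)) / 2"
      using convex_fun_on_midpoint[OF _ axis0_rvec[of 0] axis0_rvec[of 2]] by metis
    hence "2 * lloss 1 \<ge> lloss 0 + lloss 2"
      using Rz_axis0[OF N, of 0] Rz_axis0[OF N, of 1] Rz_axis0[OF N, of 2] by simp
    with lloss_strict_midpoint_convex[of 0 2] show False by simp
  qed
  moreover have "N (axis0 1) > 0"
    using N by (rule is_norm_on_axis0_pos)
  ultimately show "\<exists>c::real. c > 0 \<and> (\<exists>x\<in>rvec 1. \<exists>y\<in>{-1, 1::real}.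
              \<not> convex_fun_on 1 (Rz 1 N c x y))"
    using axis0_rvec by blast
qed

end
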